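(* In the approximating model (see context) with clock distribution satisfying the general-arrival assumptions (A1)–(A5) and $\mathbb E[S^2]<\infty$, for every $t>0$ there exist nonnegative random variables $Y_n$ such that $A_n(k)$ is stochastically dominated by $Y_n$ for all $1\le k\le tn^{2/3}$, and the family $(Y_n^2)_{n\ge1}$ is uniformly integrable.
   Context: Approximating model: fix $n$ and $\beta\in\mathbb R$. Let $T_1,\dots,T_n$ be i.i.d. nonnegative arrival clocks with distribution function $F_T$, and let $S_1,S_2,\dots$ be i.i.d. nonnegative service requirements (generic copy $S$), independent of the clocks. Put $D_j:=\frac{S_j}{n}(1+\beta n^{-1/3})$, $\Sigma_0:=0$, $\Sigma_k:=\sum_{j=1}^k D_j$. All $n$ customers start in the population. Set $Q_n(0)=0$ and for $k\ge1$, $Q_n(k)=(Q_n(k-1)+A_n(k)-1)^+$ with $A_n(k)=\sum_{i\notin\nu_k}\mathbf 1\{\Sigma_{k-1}\le T_i\le\Sigma_k\}$, where $\nu_k$ is the set of customers no longer in the population at the beginning of the $k$-th service: a customer leaves the population when its clock rings during a service, and whenever the queue is empty after a service completion, the customer of the population with the smallest clock is removed from the population and immediately put into service. General-arrival assumptions: (A1) $T$ has a positive continuous density $f_T$ on $[0,\infty)$ with $f_T(0)\in(0,\infty)$; (A2) for every $\bar x\in(0,\infty)$, $F_T(x)-F_T(\bar x)=f_T(\bar x)(x-\bar x)+o(|x-\bar x|^{4/3})$ as $x\to\bar x$; (A3) for every $C>0$, $\sup_{\bar x\le Cy^{1/3}}|F_T(\bar x+y)-F_T(\bar x)-f_T(\bar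 x)y|=o(y)$ as $y\downarrow0$; (A4) $f_T'$ exists and is continuous in a neighbourhood of $0$; (A5) $f_T(0)=\sup_{x\ge0}f_T(x)$. A real random variable $Y$ is stochastically dominated by $X$ if $\mathbb P(X\le x)\le\mathbb P(Y\le x)$ for all $x$. *)

theory Defs
  imports "HOL-Probability.Probability" "HOL-Library.Landau_Symbols"
begin

text \<open>Approximating model with n customers, parameter beta, clocks t and service
  requirements s (both indexed from 1).\<close>

definition svc_D :: "nat \<Rightarrow> real \<Rightarrow> (nat \<Rightarrow> real) \<Rightarrow> nat \<Rightarrow> real" where
  "svc_D n \<beta> s j = s j / real n * (1 + \<beta> * real n powr (-1/3))"

definition Sig :: "nat \<Rightarrow> real \<Rightarrow> (nat \<Rightarrow> real) \<Rightarrow> nat \<Rightarrow> real" where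
  "Sig n \<beta> s k = (\<Sum>j=1..k. svc_D n \<beta> s j)"

text \<open>Customers of the population (not in nu) whose clock rings during the k-th service.\<close>
definition arrivals ::
  "nat \<Rightarrow> real \<Rightarrow> (nat \<Rightarrow> real) \<Rightarrow> (nat \<Rightarrow> real) \<Rightarrow> nat set \<Rightarrow> nat \<Rightarrow> nat set" where
  "arrivals n \<beta> t s \<nu> k =
     {i \<in> {1..n}. i \<notin> \<nu> \<and> Sig n \<beta> s (k - 1) \<le> t i \<and> t i \<le> Sig n \<beta> s k}"

definition pick_min :: "(nat \<Rightarrow> real) \<Rightarrow> nat set \<Rightarrow> nat set" where
  "pick_min t P = (if P = {} then {} else {LEAST i. i \<in> P \<and> (\<forall>j\<in>P. t i \<le> t j)})"

text \<open>qstate n beta t s m = (nu_(m+1), Q_n(m)).\<close>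
primrec qstate ::
  "nat \<Rightarrow> real \<Rightarrow> (nat \<Rightarrow> real) \<Rightarrow> (nat \<Rightarrow> real) \<Rightarrow> nat \<Rightarrow> nat set \<times> nat" where
  "qstate n \<beta> t s 0 = (pick_min t {1..n}, 0)"
| "qstate n \<beta> t s (Suc m) =
     (let \<nu> = fst (qstate n \<beta> t s m);
          q = snd (qstate n \<beta> t s m);
          Arr = arrivals n \<beta> t s \<nu> (Suc m);
          a = card Arr
      in (\<nu> \<union> Arr \<union> (if q + a = 0 then pick_min t ({1..n} - (\<nu> \<union> Arr)) else {}),
          q + a - 1))"

text \<open>A_n(k), for k >= 1.\<close>
definition arr_count ::
  "nat \<Rightarrow> real \<Rightarrow> (nat \<Rightarrow> real) \<Rightarrow> (nat \<Rightarrow> real) \<Rightarrow> nat \<Rightarrow> nat" where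
  "arr_count n \<beta> t s k = card (arrivals n \<beta> t s (fst (qstate n \<beta> t s (k - 1))) k)"

definition dominated_by_law :: "'a measure \<Rightarrow> ('a \<Rightarrow> real) \<Rightarrow> real measure \<Rightarrow> bool" where
  "dominated_by_law M X \<mu> \<longleftrightarrow>
     (\<forall>x. measure \<mu> {..x} \<le> measure M {\<omega> \<in> space M. X \<omega> \<le> x})"

definition unif_integrable_laws :: "nat set \<Rightarrow> (nat \<Rightarrow> real measure) \<Rightarrow> bool" where
  "unif_integrable_laws I \<mu> \<longleftrightarrow>
     (\<forall>\<epsilon>>0. \<exists>K. \<forall>n\<in>I.
        (\<integral>\<^sup>+ x. ennreal (\<bar>x\<bar> * indicator {x. \<bar>x\<bar> > K} x) \<partial>\<mu> n) \<le> ennreal \<epsilon>)"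

end

theory Submission
  imports Defs
begin

text \<open>The arrivals during the k-th service are the clocks that ring in a window of length D_k
  determined by the services alone. As f_T <= f_T(0) (A5), conditionally on the services the n
  clocks fall into that window independently, each with probability at most f_T(0) D_k, so
  P(A_n(k) >= m | S) <= binom(n, m) (f_T(0) D_k)^m <= (n f_T(0) D_k)^m / m!, which is at most 2^-m
  once 6 n f_T(0) D_k <= m. Since n D_k <= (1 + |beta|) S_k, integrating out the services gives
  P(A_n(k) >= m) <= 2^-m + (1 - 2^-m) P(X >= m) with X = 6 f_T(0) (1 + |beta|) S_1, uniformly in n
  and k. This is the tail of max X G for a geometric G with P(G >= m) = 2^-m independent of X, so a
  single law dominates every A_n(k); it has a finite second moment because E S^2 < oo, and a
  constant family with integrable squares is uniformly integrable. The argument works for every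
  k >= 1.\<close>

section \<open>Elementary estimates\<close>

lemma power_div_fact_le_exp:
  assumes "0 \<le> y"
  shows "y ^ m / fact m \<le> exp (y::real)"
proof -
  have "(\<Sum>n\<in>{m}. y ^ n /\<^sub>R fact n) \<le> (\<Sum>n. y ^ n /\<^sub>R fact n)"
    by (rule sum_le_suminf[OF summable_exp_generic]) (use assms in auto)
  then show ?thesis by (simp add: exp_def divide_inverse_commute)
qed

lemma power_div_fact_le_half_power:
  assumes "0 \<le> y" and "6 * y \<le> real m"
  shows "y ^ m / fact m \<le> (1/2::real) ^ m"
proof -
  have "(6 * y) ^ m / fact m \<le> exp (6 * y)" using assms by (intro power_div_fact_le_exp) auto
  also have "\<dots> \<le> exp 1 ^ m" using assms by (simp add: exp_of_nat_mult[symmetric])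
  also have "\<dots> \<le> 3 ^ m" using exp_le by (intro power_mono) auto
  finally have "6 ^ m * (y ^ m / fact m) \<le> 3 ^ m" by (simp add: power_mult_distrib)
  then have "y ^ m / fact m \<le> 3 ^ m / 6 ^ m" by (simp add: field_simps)
  also have "(3::real) ^ m / 6 ^ m = (1/2) ^ m" by (simp add: power_divide[symmetric])
  finally show ?thesis .
qed

lemma binomial_mult_power_le:
  assumes "0 \<le> (q::real)"
  shows "real (n choose m) * q ^ m \<le> (real n * q) ^ m / fact m"
proof -
  have "real (n choose m) * fact m \<le> real n ^ m"
    using binomial_fact_pow[of n m] by (metis of_nat_fact of_nat_le_iff of_nat_mult of_nat_power)
  then have "real (n choose m) \<le> real n ^ m / fact m" by (simp add: field_simps)
  then have "real (n choose m) * q ^ m \<le> real n ^ m / fact m * q ^ m"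
    using assms by (intro mult_right_mono) auto
  then show ?thesis by (simp add: power_mult_distrib)
qed

lemma binomial_mult_power_le_half_power:
  assumes "0 \<le> q" and "6 * (real n * q) \<le> real m"
  shows "real (n choose m) * q ^ m \<le> (1/2) ^ m"
  using binomial_mult_power_le[OF assms(1)] power_div_fact_le_half_power[OF _ assms(2)] assms(1)
  by (meson order_trans zero_le_mult_iff of_nat_0_le_iff)

lemma sum_half_powers: "(\<Sum>w<m. (1/2::real) ^ w * (1/2)) = 1 - (1/2) ^ m"
  by (induction m) (auto simp: field_simps)

lemma summable_square_mult_half_power: "summable (\<lambda>w. real w ^ 2 * (1/2::real) ^ w)"
proof (rule summable_ratio_test[where c="3/4" and N=5])
  fix n :: nat assume "5 \<le> n"
  then have "5 * real n \<le> real n * real n" by (intro mult_right_mono) auto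
  then have "real (Suc n) ^ 2 / 2 \<le> 3/4 * real n ^ 2"
    using \<open>5 \<le> n\<close> by (simp add: power2_eq_square algebra_simps, linarith)
  then show "norm (real (Suc n) ^ 2 * (1/2::real) ^ Suc n) \<le> 3/4 * norm (real n ^ 2 * (1/2) ^ n)"
    using mult_right_mono[of _ _ "(1/2::real) ^ n"] by simp
qed simp

lemma real_le_iff_less_nat_floor_Suc:
  assumes "0 \<le> x"
  shows "real w \<le> x \<longleftrightarrow> w < nat \<lfloor>x\<rfloor> + 1"
proof -
  have "real w \<le> x \<longleftrightarrow> int w \<le> \<lfloor>x\<rfloor>" by (simp add: le_floor_iff)
  also have "\<dots> \<longleftrightarrow> w \<le> nat \<lfloor>x\<rfloor>" using assms by (simp add: le_nat_iff)
  finally show ?thesis by (simp add: less_Suc_eq_le)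
qed

section \<open>Probability estimates\<close>

lemma cdf_increment_le:
  fixes F f :: "real \<Rightarrow> real"
  assumes F_neg: "\<And>x. x < 0 \<Longrightarrow> F x = 0"
    and density: "\<And>x. 0 \<le> x \<Longrightarrow> (f has_integral F x) {0..x}"
    and bounded: "\<And>x. 0 \<le> x \<Longrightarrow> f x \<le> f0"
    and "0 \<le> f0" and "c \<le> b"
  shows "F b - F c \<le> f0 * (b - c)"
proof -
  have integral_le: "I \<le> f0 * (v - u)" if "0 \<le> u" "u \<le> v" "(f has_integral I) {u..v}" for u v I
    using has_integral_le[OF that(3) has_integral_const_real[of f0 u v]] that bounded
    by (simp add: mult.commute)
  consider "b < 0" | "c < 0" "0 \<le> b" | "0 \<le> c" using \<open>c \<le> b\<close> by linarith
  then show ?thesis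
  proof cases
    case 1
    then show ?thesis using F_neg \<open>c \<le> b\<close> \<open>0 \<le> f0\<close> by simp
  next
    case 2
    then have "F b \<le> f0 * b" using integral_le[OF _ _ density[of b]] by simp
    also have "\<dots> \<le> f0 * (b - c)" using 2 \<open>0 \<le> f0\<close> by (intro mult_left_mono) auto
    finally show ?thesis using F_neg[OF \<open>c < 0\<close>] by simp
  next
    case 3
    have "f integrable_on {c..b}"
      using integrable_subinterval_real[OF has_integral_integrable[OF density[of b]]] 3 \<open>c \<le> b\<close>
      by auto
    then obtain J where J: "(f has_integral J) {c..b}" by blast
    have "(f has_integral (F c + J)) {0..b}"
      using 3 \<open>c \<le> b\<close> by (intro has_integral_combine[OF _ _ density[of c] J]) auto
    then have "F b = F c + J" using 3 \<open>c \<le> b\<close> by (intro has_integral_unique[OF density[of b]]) auto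
    then show ?thesis using integral_le[OF 3 \<open>c \<le> b\<close> J] by simp
  qed
qed

lemma (in prob_space) prob_between_le:
  fixes X :: "'a \<Rightarrow> real" and F :: "real \<Rightarrow> real"
  assumes "X \<in> borel_measurable M"
    and cdf: "\<And>x. prob {\<omega> \<in> space M. X \<omega> \<le> x} = F x"
    and increment: "\<And>c b. c \<le> b \<Longrightarrow> F b - F c \<le> L * (b - c)"
    and "0 < L"
  shows "prob {\<omega> \<in> space M. lo \<le> X \<omega> \<and> X \<omega> \<le> hi} \<le> L * max 0 (hi - lo)"
proof (cases "lo \<le> hi")
  case True
  note [measurable] = assms(1)
  show ?thesis
  proof (rule field_le_epsilon)
    fix e :: real assume "0 < e"
    define d where "d = e / L"
    have "0 < d" using \<open>0 < e\<close> \<open>0 < L\<close> by (simp add: d_def)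
    \<comment> \<open>the closed interval is covered by a half-open one, whose probability is a cdf difference\<close>
    have "prob {\<omega> \<in> space M. lo \<le> X \<omega> \<and> X \<omega> \<le> hi}
        \<le> prob ({\<omega> \<in> space M. X \<omega> \<le> hi} - {\<omega> \<in> space M. X \<omega> \<le> lo - d})"
      using \<open>0 < d\<close> by (intro finite_measure_mono) auto
    also have "\<dots> = F hi - F (lo - d)"
      using finite_measure_Diff[of "{\<omega> \<in> space M. X \<omega> \<le> hi}" "{\<omega> \<in> space M. X \<omega> \<le> lo - d}"]
        \<open>0 < d\<close> True cdf by force
    also have "\<dots> \<le> L * (hi - (lo - d))" using increment \<open>0 < d\<close> True by simp
    also have "\<dots> = L * max 0 (hi - lo) + e" using True \<open>0 < L\<close> by (simp add: d_def algebra_simps)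
    finally show "prob {\<omega> \<in> space M. lo \<le> X \<omega> \<and> X \<omega> \<le> hi} \<le> L * max 0 (hi - lo) + e" .
  qed
next
  case False
  then have empty: "{\<omega> \<in> space M. lo \<le> X \<omega> \<and> X \<omega> \<le> hi} = {}" by auto
  show ?thesis unfolding empty using \<open>0 < L\<close> by simp
qed

lemma (in prob_space) prob_at_least_indep_events_le:
  assumes indep: "indep_events A I" and "finite I" and "1 \<le> m"
    and "0 \<le> q" and bound: "\<And>i. i \<in> I \<Longrightarrow> prob (A i) \<le> q"
  shows "prob {\<omega> \<in> space M. \<exists>J\<subseteq>I. card J = m \<and> (\<forall>i\<in>J. \<omega> \<in> A i)} \<le> real (card I choose m) * q ^ m"
proof -
  define Js where "Js = {J. J \<subseteq> I \<and> card J = m}"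
  have "finite Js" unfolding Js_def using \<open>finite I\<close> by (auto intro: finite_subset[of _ "Pow I"])
  have events: "A i \<in> events" if "i \<in> I" for i using indep that by (auto simp: indep_events_def)
  have J: "J \<noteq> {}" "finite J" "J \<subseteq> I" if "J \<in> Js" for J
    using that \<open>1 \<le> m\<close> \<open>finite I\<close> by (auto simp: Js_def intro: finite_subset)
  have "{\<omega> \<in> space M. \<exists>J\<subseteq>I. card J = m \<and> (\<forall>i\<in>J. \<omega> \<in> A i)} = (\<Union>J\<in>Js. \<Inter>i\<in>J. A i)"
  proof (intro set_eqI iffI)
    fix \<omega> assume "\<omega> \<in> (\<Union>J\<in>Js. \<Inter>i\<in>J. A i)"
    then obtain J where "J \<in> Js" "\<forall>i\<in>J. \<omega> \<in> A i" by blast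
    moreover obtain i where "i \<in> J" using J(1)[OF \<open>J \<in> Js\<close>] by blast
    ultimately have "\<omega> \<in> space M"
      using J(3) events sets.sets_into_space by blast
    with \<open>J \<in> Js\<close> \<open>\<forall>i\<in>J. \<omega> \<in> A i\<close>
    show "\<omega> \<in> {\<omega> \<in> space M. \<exists>J\<subseteq>I. card J = m \<and> (\<forall>i\<in>J. \<omega> \<in> A i)}"
      by (auto simp: Js_def)
  qed (auto simp: Js_def)
  also have "prob \<dots> \<le> (\<Sum>J\<in>Js. prob (\<Inter>i\<in>J. A i))"
  proof (intro finite_measure_subadditive_finite \<open>finite Js\<close> image_subsetI)
    show "(\<Inter>i\<in>J. A i) \<in> events" if "J \<in> Js" for J
      using J[OF that] events by (intro sets.finite_INT) auto
  qed
  also have "\<dots> \<le> (\<Sum>J\<in>Js. q ^ m)"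
  proof (rule sum_mono)
    fix J assume "J \<in> Js"
    have "prob (\<Inter>i\<in>J. A i) = (\<Prod>i\<in>J. prob (A i))"
      using indep J[OF \<open>J \<in> Js\<close>] by (auto simp: indep_events_def)
    also have "\<dots> \<le> (\<Prod>i\<in>J. q)" using J[OF \<open>J \<in> Js\<close>] bound by (intro prod_mono) auto
    finally show "prob (\<Inter>i\<in>J. A i) \<le> q ^ m" using \<open>J \<in> Js\<close> by (simp add: Js_def)
  qed
  also have "\<dots> = real (card I choose m) * q ^ m"
    using n_subsets[OF \<open>finite I\<close>] by (simp add: Js_def)
  finally show ?thesis .
qed

lemma (in prob_space) prob_many_in_interval_le_half_power:
  fixes Z :: "'i \<Rightarrow> 'a \<Rightarrow> real"
  assumes "indep_vars (\<lambda>_. borel) Z I" and "finite I" and "1 \<le> m" and "0 \<le> q"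
    and "\<And>j. j \<in> I \<Longrightarrow> prob {\<omega> \<in> space M. a \<le> Z j \<omega> \<and> Z j \<omega> \<le> b} \<le> q"
    and "6 * (real (card I) * q) \<le> real m"
  shows "prob {\<omega> \<in> space M. \<exists>J\<subseteq>I. card J = m \<and> (\<forall>j\<in>J. a \<le> Z j \<omega> \<and> Z j \<omega> \<le> b)} \<le> (1/2) ^ m"
proof -
  let ?A = "\<lambda>j. {\<omega> \<in> space M. a \<le> Z j \<omega> \<and> Z j \<omega> \<le> b}"
  have "indep_events ?A I" by (rule indep_eventsI_indep_vars[OF assms(1)]) measurable
  have "prob {\<omega> \<in> space M. \<exists>J\<subseteq>I. card J = m \<and> (\<forall>j\<in>J. a \<le> Z j \<omega> \<and> Z j \<omega> \<le> b)}
      = prob {\<omega> \<in> space M. \<exists>J\<subseteq>I. card J = m \<and> (\<forall>j\<in>J. \<omega> \<in> ?A j)}"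
    by (intro arg_cong[where f=prob]) auto
  also have "\<dots> \<le> real (card I choose m) * q ^ m"
    using assms(5) by (intro prob_at_least_indep_events_le[OF \<open>indep_events ?A I\<close> assms(2-4)])
  also have "\<dots> \<le> (1/2) ^ m" by (rule binomial_mult_power_le_half_power[OF assms(4,6)])
  finally show ?thesis .
qed

lemma (in prob_space) emeasure_indep_pair:
  assumes indep: "indep_var MY Y MX X" and E: "E \<in> sets (MY \<Otimes>\<^sub>M MX)"
  shows "emeasure M {\<omega> \<in> space M. (Y \<omega>, X \<omega>) \<in> E}
    = (\<integral>\<^sup>+ y. emeasure M {\<omega> \<in> space M. (y, X \<omega>) \<in> E} \<partial>distr M MY Y)"
proof -
  have Y: "Y \<in> measurable M MY" and X: "X \<in> measurable M MX"
    using indep by (auto dest: indep_var_rv1 indep_var_rv2)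
  interpret PX: prob_space "distr M MX X" by (rule prob_space_distr[OF X])
  have "emeasure M {\<omega> \<in> space M. (Y \<omega>, X \<omega>) \<in> E}
      = emeasure (distr M (MY \<Otimes>\<^sub>M MX) (\<lambda>\<omega>. (Y \<omega>, X \<omega>))) E"
    using E X Y by (subst emeasure_distr) (auto intro!: arg_cong[where f="emeasure M"])
  also have "distr M (MY \<Otimes>\<^sub>M MX) (\<lambda>\<omega>. (Y \<omega>, X \<omega>)) = distr M MY Y \<Otimes>\<^sub>M distr M MX X"
    using indep unfolding indep_var_distribution_eq by simp
  also have "emeasure \<dots> E = (\<integral>\<^sup>+ y. emeasure (distr M MX X) (Pair y -` E) \<partial>distr M MY Y)"
  proof (rule PX.emeasure_pair_measure_alt)
    have "sets (distr M MY Y \<Otimes>\<^sub>M distr M MX X) = sets (MY \<Otimes>\<^sub>M MX)"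
      by (rule sets_pair_measure_cong) simp_all
    then show "E \<in> sets (distr M MY Y \<Otimes>\<^sub>M distr M MX X)" using E by simp
  qed
  also have "\<dots> = (\<integral>\<^sup>+ y. emeasure M {\<omega> \<in> space M. (y, X \<omega>) \<in> E} \<partial>distr M MY Y)"
    using E by (intro nn_integral_cong) (auto simp: emeasure_distr[OF X] intro!: arg_cong[where f="emeasure M"])
  finally show ?thesis .
qed

lemma (in prob_space) prob_indep_pair_le:
  assumes indep: "indep_var MY Y MX X"
    and E: "E \<in> sets (MY \<Otimes>\<^sub>M MX)" and C: "C \<in> sets MY" and "0 \<le> h" "h \<le> 1"
    and small_section: "\<And>y. y \<in> space MY \<Longrightarrow> y \<notin> C \<Longrightarrow> prob {\<omega> \<in> space M. (y, X \<omega>) \<in> E} \<le> h"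
  shows "prob {\<omega> \<in> space M. (Y \<omega>, X \<omega>) \<in> E} \<le> h + (1 - h) * prob {\<omega> \<in> space M. Y \<omega> \<in> C}"
proof -
  have Y: "Y \<in> measurable M MY" using indep by (auto dest: indep_var_rv1)
  define PY where "PY = distr M MY Y"
  interpret PY: prob_space PY unfolding PY_def by (rule prob_space_distr[OF Y])
  have "C \<in> sets PY" using C by (simp add: PY_def)
  have section_bound: "emeasure M {\<omega> \<in> space M. (y, X \<omega>) \<in> E} \<le> ennreal h + ennreal (1 - h) * indicator C y"
    if "y \<in> space PY" for y
  proof (cases "y \<in> C")
    case True
    have "ennreal h + ennreal (1 - h) = 1"
      using \<open>0 \<le> h\<close> \<open>h \<le> 1\<close> by (subst ennreal_plus[symmetric]) auto
    then show ?thesis using True emeasure_le_1 by simp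
  next
    case False
    then show ?thesis
      using small_section[OF _ False] that by (simp add: emeasure_eq_measure PY_def ennreal_leI)
  qed
  have "emeasure M {\<omega> \<in> space M. (Y \<omega>, X \<omega>) \<in> E}
      = (\<integral>\<^sup>+ y. emeasure M {\<omega> \<in> space M. (y, X \<omega>) \<in> E} \<partial>PY)"
    unfolding PY_def by (rule emeasure_indep_pair[OF indep E])
  also have "\<dots> \<le> (\<integral>\<^sup>+ y. ennreal h + ennreal (1 - h) * indicator C y \<partial>PY)"
    by (intro nn_integral_mono section_bound)
  also have "\<dots> = ennreal h + ennreal (1 - h) * emeasure PY C"
    using \<open>C \<in> sets PY\<close> by (subst nn_integral_add) (auto simp: nn_integral_cmult_indicator PY.emeasure_space_1)
  also have "emeasure PY C = emeasure M {\<omega> \<in> space M. Y \<omega> \<in> C}"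
    unfolding PY_def using C by (subst emeasure_distr[OF Y]) (auto intro!: arg_cong[where f="emeasure M"])
  also have "ennreal h + ennreal (1 - h) * \<dots> = ennreal (h + (1 - h) * prob {\<omega> \<in> space M. Y \<omega> \<in> C})"
    using \<open>0 \<le> h\<close> \<open>h \<le> 1\<close> by (simp add: emeasure_eq_measure ennreal_plus ennreal_mult)
  finally have "ennreal (prob {\<omega> \<in> space M. (Y \<omega>, X \<omega>) \<in> E})
      \<le> ennreal (h + (1 - h) * prob {\<omega> \<in> space M. Y \<omega> \<in> C})"
    by (simp add: emeasure_eq_measure)
  moreover have "0 \<le> h + (1 - h) * prob {\<omega> \<in> space M. Y \<omega> \<in> C}" using \<open>h \<le> 1\<close> \<open>0 \<le> h\<close> by simp
  ultimately show ?thesis by simp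
qed

lemma sets_many_between:
  assumes "finite I" and [measurable]: "lo \<in> borel_measurable N" "hi \<in> borel_measurable N"
  shows "{p \<in> space (N \<Otimes>\<^sub>M PiM I (\<lambda>_. borel)). \<exists>J\<subseteq>I. card J = m \<and>
      (\<forall>j\<in>J. lo (fst p) \<le> snd p j \<and> snd p j \<le> (hi (fst p) :: real))} \<in> sets (N \<Otimes>\<^sub>M PiM I (\<lambda>_. borel))"
proof -
  have "finite {J. J \<subseteq> I \<and> card J = m}" using assms(1) by (auto intro: finite_subset[of _ "Pow I"])
  moreover have "{p \<in> space (N \<Otimes>\<^sub>M PiM I (\<lambda>_. borel)). \<forall>j\<in>J. lo (fst p) \<le> snd p j \<and> snd p j \<le> hi (fst p)}
      \<in> sets (N \<Otimes>\<^sub>M PiM I (\<lambda>_. borel))" if "J \<subseteq> I" for J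
  proof (intro sets.sets_Collect_finite_All sets.sets_Collect_conj)
    show "finite J" using that assms(1) by (rule finite_subset)
    fix j assume "j \<in> J"
    then have [measurable]: "(\<lambda>x. x j) \<in> borel_measurable (PiM I (\<lambda>_. borel))"
      using that by (intro measurable_component_singleton) auto
    show "{p \<in> space (N \<Otimes>\<^sub>M PiM I (\<lambda>_. borel)). lo (fst p) \<le> snd p j} \<in> sets (N \<Otimes>\<^sub>M PiM I (\<lambda>_. borel))"
      "{p \<in> space (N \<Otimes>\<^sub>M PiM I (\<lambda>_. borel)). snd p j \<le> hi (fst p)} \<in> sets (N \<Otimes>\<^sub>M PiM I (\<lambda>_. borel))"
      by measurable
  qed
  ultimately have "{p \<in> space (N \<Otimes>\<^sub>M PiM I (\<lambda>_. borel)). \<exists>J\<in>{J. J \<subseteq> I \<and> card J = m}.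
      \<forall>j\<in>J. lo (fst p) \<le> snd p j \<and> snd p j \<le> hi (fst p)} \<in> sets (N \<Otimes>\<^sub>M PiM I (\<lambda>_. borel))"
    by (intro sets.sets_Collect_finite_Ex) auto
  then show ?thesis by (simp add: conj_commute ex_simps)
qed

lemma (in prob_space) prob_many_in_random_window_le:
  fixes Z :: "'i \<Rightarrow> 'a \<Rightarrow> real" and lo hi :: "('i \<Rightarrow> real) \<Rightarrow> real"
  assumes indep: "indep_vars (\<lambda>_. borel) Z (I \<union> K)" and "I \<inter> K = {}" and "finite I"
    and "1 \<le> m" and "0 \<le> L"
    and [measurable]: "lo \<in> borel_measurable (PiM K (\<lambda>_. borel))" "hi \<in> borel_measurable (PiM K (\<lambda>_. borel))"
    and interval: "\<And>j a b. j \<in> I \<Longrightarrow> prob {\<omega> \<in> space M. a \<le> Z j \<omega> \<and> Z j \<omega> \<le> b} \<le> L * max 0 (b - a)"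
    and C: "C \<in> sets (PiM K (\<lambda>_. borel))"
    and short_window: "\<And>y. y \<in> space (PiM K (\<lambda>_. borel)) \<Longrightarrow> y \<notin> C \<Longrightarrow>
      6 * (real (card I) * (L * max 0 (hi y - lo y))) \<le> real m"
  defines "W \<equiv> {\<omega> \<in> space M. \<exists>J\<subseteq>I. card J = m \<and>
      (\<forall>j\<in>J. lo (restrict (\<lambda>i. Z i \<omega>) K) \<le> Z j \<omega> \<and> Z j \<omega> \<le> hi (restrict (\<lambda>i. Z i \<omega>) K))}"
  shows "W \<in> events"
    and "prob W \<le> (1/2) ^ m + (1 - (1/2) ^ m) * prob {\<omega> \<in> space M. restrict (\<lambda>i. Z i \<omega>) K \<in> C}"
proof -
  define MI where "MI = PiM I (\<lambda>_. borel :: real measure)"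
  define MK where "MK = PiM K (\<lambda>_. borel :: real measure)"
  define X where "X \<omega> = restrict (\<lambda>j. Z j \<omega>) I" for \<omega>
  define Y where "Y \<omega> = restrict (\<lambda>j. Z j \<omega>) K" for \<omega>
  define E where "E = {p \<in> space (MK \<Otimes>\<^sub>M MI). \<exists>J\<subseteq>I. card J = m \<and>
      (\<forall>j\<in>J. lo (fst p) \<le> snd p j \<and> snd p j \<le> hi (fst p))}"
  have indep_YX: "indep_var MK Y MI X"
    unfolding MK_def MI_def Y_def X_def using \<open>I \<inter> K = {}\<close>
    by (intro indep_var_restrict[OF indep]) auto
  then have [measurable]: "Y \<in> measurable M MK" "X \<in> measurable M MI"
    by (auto dest: indep_var_rv1 indep_var_rv2)
  have E_sets: "E \<in> sets (MK \<Otimes>\<^sub>M MI)"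
    unfolding E_def MK_def MI_def using \<open>finite I\<close> by (rule sets_many_between) simp_all
  have in_E_iff: "(y, X \<omega>) \<in> E \<longleftrightarrow> (\<exists>J\<subseteq>I. card J = m \<and> (\<forall>j\<in>J. lo y \<le> Z j \<omega> \<and> Z j \<omega> \<le> hi y))"
    if "y \<in> space MK" "\<omega> \<in> space M" for y \<omega>
  proof -
    have "(y, X \<omega>) \<in> space (MK \<Otimes>\<^sub>M MI)"
      using that by (auto simp: space_pair_measure intro: measurable_space)
    then have "(y, X \<omega>) \<in> E \<longleftrightarrow> (\<exists>J\<subseteq>I. card J = m \<and> (\<forall>j\<in>J. lo y \<le> X \<omega> j \<and> X \<omega> j \<le> hi y))"
      by (simp add: E_def)
    also have "\<dots> \<longleftrightarrow> (\<exists>J\<subseteq>I. card J = m \<and> (\<forall>j\<in>J. lo y \<le> Z j \<omega> \<and> Z j \<omega> \<le> hi y))"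
      unfolding X_def by (auto simp: subset_eq)
    finally show ?thesis .
  qed
  have W_eq: "W = {\<omega> \<in> space M. (Y \<omega>, X \<omega>) \<in> E}"
    unfolding W_def using in_E_iff measurable_space[of Y M MK] by (auto simp: Y_def)
  then show "W \<in> events"
    using measurable_sets[OF _ E_sets, of "\<lambda>\<omega>. (Y \<omega>, X \<omega>)" M] by (simp add: vimage_def Int_def conj_commute)
  have small_section: "prob {\<omega> \<in> space M. (y, X \<omega>) \<in> E} \<le> (1/2) ^ m"
    if "y \<in> space MK" "y \<notin> C" for y
  proof -
    have "{\<omega> \<in> space M. (y, X \<omega>) \<in> E}
        = {\<omega> \<in> space M. \<exists>J\<subseteq>I. card J = m \<and> (\<forall>j\<in>J. lo y \<le> Z j \<omega> \<and> Z j \<omega> \<le> hi y)}"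
      using in_E_iff[OF that(1)] by auto
    also have "prob \<dots> \<le> (1/2) ^ m"
    proof (rule prob_many_in_interval_le_half_power[OF indep_vars_subset[OF indep Un_upper1] \<open>finite I\<close>
        \<open>1 \<le> m\<close>])
      show "0 \<le> L * max 0 (hi y - lo y)" using \<open>0 \<le> L\<close> by simp
      show "6 * (real (card I) * (L * max 0 (hi y - lo y))) \<le> real m"
        using short_window that by (simp add: MK_def)
    qed (use interval in auto)
    finally show ?thesis .
  qed
  show "prob W \<le> (1/2) ^ m + (1 - (1/2) ^ m) * prob {\<omega> \<in> space M. restrict (\<lambda>i. Z i \<omega>) K \<in> C}"
    unfolding W_eq Y_def[symmetric]
    using C by (intro prob_indep_pair_le[OF indep_YX E_sets _ _ _ small_section])
      (auto simp: MK_def power_le_one)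
qed

lemma (in prob_space) prob_eq_of_distr_eq:
  fixes X Y :: "'a \<Rightarrow> real"
  assumes "distr M borel X = distr M borel Y"
    and "X \<in> borel_measurable M" "Y \<in> borel_measurable M" and "{x. P x} \<in> sets borel"
  shows "prob {\<omega> \<in> space M. P (X \<omega>)} = prob {\<omega> \<in> space M. P (Y \<omega>)}"
proof -
  have "Z -` {x. P x} \<inter> space M = {\<omega> \<in> space M. P (Z \<omega>)}" for Z :: "'a \<Rightarrow> real" by auto
  then show ?thesis using measure_distr[OF assms(2,4)] measure_distr[OF assms(3,4)] assms(1) by metis
qed

lemma (in prob_space) nn_integral_square_distr_scaled_finite:
  assumes [measurable]: "Z \<in> borel_measurable M" and "integrable M (\<lambda>\<omega>. (Z \<omega>)\<^sup>2)"
  shows "(\<integral>\<^sup>+ x. ennreal (x\<^sup>2) \<partial>distr M borel (\<lambda>\<omega>. c * \<bar>Z \<omega>\<bar>)) < \<infinity>"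
proof -
  have "(\<integral>\<^sup>+ x. ennreal (x\<^sup>2) \<partial>distr M borel (\<lambda>\<omega>. c * \<bar>Z \<omega>\<bar>))
      = (\<integral>\<^sup>+ \<omega>. ennreal (c\<^sup>2) * ennreal ((Z \<omega>)\<^sup>2) \<partial>M)"
    by (subst nn_integral_distr) (auto simp: ennreal_mult[symmetric] power_mult_distrib)
  also have "\<dots> = ennreal (c\<^sup>2) * (\<integral>\<^sup>+ \<omega>. ennreal ((Z \<omega>)\<^sup>2) \<partial>M)"
    by (rule nn_integral_cmult) measurable
  also have "\<dots> < \<infinity>"
    using integrableD(2)[OF assms(2)] by (simp add: less_top ennreal_mult_less_top)
  finally show ?thesis .
qed

lemma unif_integrable_laws_const:
  assumes [measurable_cong]: "sets \<nu> = sets borel"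
    and finite: "(\<integral>\<^sup>+ x. ennreal \<bar>x\<bar> \<partial>\<nu>) < \<infinity>"
  shows "unif_integrable_laws I (\<lambda>_. \<nu>)"
  unfolding unif_integrable_laws_def
proof (intro allI impI)
  fix \<epsilon> :: real assume "0 < \<epsilon>"
  let ?tail = "\<lambda>K. \<integral>\<^sup>+ x. ennreal (\<bar>x\<bar> * indicator {x. \<bar>x\<bar> > K} x) \<partial>\<nu>"
  have "(\<lambda>i. ?tail (real i)) \<longlonglongrightarrow> (\<integral>\<^sup>+ x. 0 \<partial>\<nu>)"
  proof (rule nn_integral_dominated_convergence[where w="\<lambda>x. ennreal \<bar>x\<bar>"])
    show "AE x in \<nu>. (\<lambda>i. ennreal (\<bar>x\<bar> * indicator {x. \<bar>x\<bar> > real i} x)) \<longlonglongrightarrow> 0" for x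
    proof (rule AE_I2)
      fix x :: real
      obtain k :: nat where "\<bar>x\<bar> < real k" using reals_Archimedean2 by blast
      then have "\<forall>\<^sub>F i in sequentially. ennreal (\<bar>x\<bar> * indicator {x. \<bar>x\<bar> > real i} x) = 0"
        unfolding eventually_sequentially by (intro exI[of _ k]) (auto simp: indicator_def)
      then show "(\<lambda>i. ennreal (\<bar>x\<bar> * indicator {x. \<bar>x\<bar> > real i} x)) \<longlonglongrightarrow> 0"
        by (simp add: tendsto_eventually)
    qed
  qed (use finite in \<open>auto intro!: AE_I2 ennreal_leI simp: indicator_def\<close>)
  then have "\<forall>\<^sub>F i in sequentially. ?tail (real i) < ennreal \<epsilon>"
    using \<open>0 < \<epsilon>\<close> by (intro order_tendstoD) auto
  then obtain i where "?tail (real i) < ennreal \<epsilon>" using eventually_sequentially by auto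
  then show "\<exists>K. \<forall>n\<in>I. ?tail K \<le> ennreal \<epsilon>" by (intro exI[of _ "real i"]) (simp add: less_imp_le)
qed

lemma unif_integrable_laws_square:
  assumes "sets \<mu> = sets borel" and "(\<integral>\<^sup>+ x. ennreal (x\<^sup>2) \<partial>\<mu>) < \<infinity>"
  shows "unif_integrable_laws I (\<lambda>_. distr \<mu> borel (\<lambda>x. x\<^sup>2))"
proof (rule unif_integrable_laws_const)
  have "(\<lambda>x. x\<^sup>2) \<in> borel_measurable \<mu>" unfolding measurable_cong_sets[OF assms(1) refl] by simp
  then have "(\<integral>\<^sup>+ z. ennreal \<bar>z\<bar> \<partial>distr \<mu> borel (\<lambda>x. x\<^sup>2)) = (\<integral>\<^sup>+ x. ennreal (x\<^sup>2) \<partial>\<mu>)"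
    by (simp add: nn_integral_distr)
  then show "(\<integral>\<^sup>+ z. ennreal \<bar>z\<bar> \<partial>distr \<mu> borel (\<lambda>x. x\<^sup>2)) < \<infinity>" using assms(2) by simp
qed simp

section \<open>The dominating law\<close>

text \<open>The law of max X G, for X with law nu and G independent of X with P(G >= m) = 2^-m.\<close>

definition max_geometric_law :: "real measure \<Rightarrow> real measure" where
  "max_geometric_law \<nu> =
     distr (\<nu> \<Otimes>\<^sub>M measure_pmf (geometric_pmf (1/2))) borel (\<lambda>p. max (fst p) (real (snd p)))"

lemma sets_max_geometric_law [simp]: "sets (max_geometric_law \<nu>) = sets borel"
  by (simp add: max_geometric_law_def)

lemma max_fst_real_snd_measurable [measurable]:
  assumes [measurable_cong]: "sets \<nu> = sets borel"
  shows "(\<lambda>p. max (fst p) (real (snd p))) \<in> borel_measurable (\<nu> \<Otimes>\<^sub>M measure_pmf (geometric_pmf (1/2)))"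
  by measurable

lemma prob_space_max_geometric_law:
  assumes "prob_space \<nu>" and "sets \<nu> = sets borel"
  shows "prob_space (max_geometric_law \<nu>)"
  unfolding max_geometric_law_def
  by (intro prob_space.prob_space_distr prob_space_pair assms prob_space_measure_pmf
      max_fst_real_snd_measurable)

lemma emeasure_max_geometric_law_negative:
  assumes "sets \<nu> = sets borel"
  shows "emeasure (max_geometric_law \<nu>) {..<0} = 0"
proof -
  have "(\<lambda>p. max (fst p) (real (snd p))) -` {..<0} = {}" by (auto simp: max_less_iff_conj)
  then show ?thesis unfolding max_geometric_law_def using assms by (subst emeasure_distr) auto
qed

lemma measure_max_geometric_law_atMost:
  assumes "prob_space \<nu>" and "sets \<nu> = sets borel"
  shows "measure (max_geometric_law \<nu>) {..x}
       = measure \<nu> {..x} * measure_pmf.prob (geometric_pmf (1/2)) {w. real w \<le> x}"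
proof -
  let ?G = "measure_pmf (geometric_pmf (1/2))"
  have "measure (max_geometric_law \<nu>) {..x} = measure (\<nu> \<Otimes>\<^sub>M ?G) ({..x} \<times> {w. real w \<le> x})"
    unfolding max_geometric_law_def using assms(2)
    by (subst measure_distr) (auto simp: space_pair_measure sets_eq_imp_space_eq intro!: arg_cong2[where f=measure])
  also have "\<dots> = measure \<nu> {..x} * measure ?G {w. real w \<le> x}"
    using assms measure_pmf.emeasure_pair_measure_Times[of "{..x}" \<nu> "{w. real w \<le> x}"]
    by (simp add: measure_def enn2real_mult)
  finally show ?thesis .
qed

lemma measure_geometric_half_le:
  assumes "0 \<le> x"
  shows "measure_pmf.prob (geometric_pmf (1/2)) {w. real w \<le> x} = 1 - (1/2) ^ (nat \<lfloor>x\<rfloor> + 1)"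
proof -
  have "{w. real w \<le> x} = {..<nat \<lfloor>x\<rfloor> + 1}" using real_le_iff_less_nat_floor_Suc[OF assms] by auto
  then show ?thesis
    using sum_half_powers[of "nat \<lfloor>x\<rfloor> + 1"] by (simp add: measure_measure_pmf_finite)
qed

lemma nn_integral_geometric_half_square_finite:
  "(\<integral>\<^sup>+ w. ennreal ((real w)\<^sup>2) \<partial>measure_pmf (geometric_pmf (1/2))) < \<infinity>"
proof -
  have "(\<integral>\<^sup>+ w. ennreal ((real w)\<^sup>2) \<partial>measure_pmf (geometric_pmf (1/2)))
      = (\<Sum>w. ennreal ((1/2) * (real w ^ 2 * (1/2) ^ w)))"
    by (simp add: nn_integral_measure_pmf nn_integral_count_space_nat ennreal_mult[symmetric]
        algebra_simps)
  also have "\<dots> = ennreal (\<Sum>w. (1/2) * (real w ^ 2 * (1/2) ^ w))"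
    by (intro suminf_ennreal2 summable_mult summable_square_mult_half_power) simp
  finally show ?thesis by simp
qed

lemma nn_integral_square_max_geometric_law_finite:
  assumes "prob_space \<nu>" and [measurable_cong]: "sets \<nu> = sets borel"
    and finite: "(\<integral>\<^sup>+ x. ennreal (x\<^sup>2) \<partial>\<nu>) < \<infinity>"
  shows "(\<integral>\<^sup>+ x. ennreal (x\<^sup>2) \<partial>max_geometric_law \<nu>) < \<infinity>"
proof -
  let ?G = "measure_pmf (geometric_pmf (1/2))"
  let ?CG = "\<integral>\<^sup>+ w. ennreal ((real w)\<^sup>2) \<partial>?G"
  interpret \<nu>: prob_space \<nu> by fact
  have "(\<integral>\<^sup>+ x. ennreal (x\<^sup>2) \<partial>max_geometric_law \<nu>)
      = (\<integral>\<^sup>+ p. ennreal ((max (fst p) (real (snd p)))\<^sup>2) \<partial>(\<nu> \<Otimes>\<^sub>M ?G))"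
    unfolding max_geometric_law_def
    by (rule nn_integral_distr[OF max_fst_real_snd_measurable[OF assms(2)]]) simp
  also have "\<dots> \<le> (\<integral>\<^sup>+ p. ennreal ((fst p)\<^sup>2 + (real (snd p))\<^sup>2) \<partial>(\<nu> \<Otimes>\<^sub>M ?G))"
    by (intro nn_integral_mono ennreal_leI) (simp add: max_def)
  also have "\<dots> = (\<integral>\<^sup>+ x. \<integral>\<^sup>+ w. ennreal (x\<^sup>2 + (real w)\<^sup>2) \<partial>?G \<partial>\<nu>)"
  proof -
    have "(\<lambda>p. ennreal ((fst p)\<^sup>2 + (real (snd p))\<^sup>2)) \<in> borel_measurable (\<nu> \<Otimes>\<^sub>M ?G)"
      by measurable
    from measure_pmf.nn_integral_fst[OF this] show ?thesis by simp
  qed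
  also have "\<dots> = (\<integral>\<^sup>+ x. ennreal (x\<^sup>2) + ?CG \<partial>\<nu>)"
    by (intro nn_integral_cong)
       (simp add: ennreal_plus nn_integral_add measure_pmf.emeasure_space_1)
  also have "\<dots> = (\<integral>\<^sup>+ x. ennreal (x\<^sup>2) \<partial>\<nu>) + ?CG"
    by (subst nn_integral_add) (auto simp: \<nu>.emeasure_space_1)
  also have "\<dots> < \<infinity>" using finite nn_integral_geometric_half_square_finite by simp
  finally show ?thesis .
qed

lemma (in prob_space) unif_integrable_laws_square_max_geometric_law:
  assumes "Z \<in> borel_measurable M" and "integrable M (\<lambda>\<omega>. (Z \<omega>)\<^sup>2)"
  shows "unif_integrable_laws I
    (\<lambda>_. distr (max_geometric_law (distr M borel (\<lambda>\<omega>. c * \<bar>Z \<omega>\<bar>))) borel (\<lambda>x. x\<^sup>2))"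
proof (rule unif_integrable_laws_square)
  have "(\<lambda>\<omega>. c * \<bar>Z \<omega>\<bar>) \<in> borel_measurable M" using assms(1) by measurable
  then show "(\<integral>\<^sup>+ x. ennreal (x\<^sup>2) \<partial>max_geometric_law (distr M borel (\<lambda>\<omega>. c * \<bar>Z \<omega>\<bar>))) < \<infinity>"
    by (intro nn_integral_square_max_geometric_law_finite nn_integral_square_distr_scaled_finite
        prob_space_distr assms) simp_all
qed simp

lemma (in prob_space) dominated_by_max_geometric_law:
  fixes N :: "'a \<Rightarrow> nat" and X :: "'a \<Rightarrow> real"
  assumes N [measurable]: "N \<in> measurable M (count_space UNIV)"
    and X [measurable]: "X \<in> borel_measurable M"
    and tail: "\<And>m. 1 \<le> m \<Longrightarrow> prob {\<omega> \<in> space M. m \<le> N \<omega>}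
      \<le> (1/2) ^ m + (1 - (1/2) ^ m) * prob {\<omega> \<in> space M. real m \<le> X \<omega>}"
  shows "dominated_by_law M (\<lambda>\<omega>. real (N \<omega>)) (max_geometric_law (distr M borel X))"
  unfolding dominated_by_law_def
proof
  fix x :: real
  let ?G = "geometric_pmf (1/2)"
  have "measure (distr M borel X) {..x} = prob {\<omega> \<in> space M. X \<omega> \<le> x}"
    by (subst measure_distr) (auto intro!: arg_cong[where f=prob])
  then have cdf: "measure (max_geometric_law (distr M borel X)) {..x}
      = prob {\<omega> \<in> space M. X \<omega> \<le> x} * measure_pmf.prob ?G {w. real w \<le> x}"
    using measure_max_geometric_law_atMost[OF prob_space_distr[OF X]] by simp
  show "measure (max_geometric_law (distr M borel X)) {..x}
      \<le> prob {\<omega> \<in> space M. real (N \<omega>) \<le> x}"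
  proof (cases "x < 0")
    case True
    then have "{w. real w \<le> x} = {}" by auto
    then show ?thesis unfolding cdf by simp
  next
    case False
    define m where "m = nat \<lfloor>x\<rfloor> + 1"
    define h where "h = (1/2::real) ^ m"
    define p where "p = prob {\<omega> \<in> space M. real m \<le> X \<omega>}"
    have "1 \<le> m" "x < real m" using False by (auto simp: m_def) linarith
    have "h \<le> 1" by (simp add: h_def power_le_one)
    have "prob {\<omega> \<in> space M. X \<omega> \<le> x} \<le> prob (space M - {\<omega> \<in> space M. real m \<le> X \<omega>})"
      using \<open>x < real m\<close> by (intro finite_measure_mono) auto
    also have "\<dots> = 1 - p" unfolding p_def by (rule prob_compl) measurable
    finally have "prob {\<omega> \<in> space M. X \<omega> \<le> x} \<le> 1 - p" .
    have "measure (max_geometric_law (distr M borel X)) {..x} = prob {\<omega> \<in> space M. X \<omega> \<le> x} * (1 - h)"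
      unfolding cdf using measure_geometric_half_le False by (simp add: h_def m_def)
    also have "\<dots> \<le> (1 - p) * (1 - h)"
      using \<open>prob {\<omega> \<in> space M. X \<omega> \<le> x} \<le> 1 - p\<close> \<open>h \<le> 1\<close> by (intro mult_right_mono) auto
    also have "\<dots> = 1 - (h + (1 - h) * p)" by (simp add: algebra_simps)
    also have "\<dots> \<le> 1 - prob {\<omega> \<in> space M. m \<le> N \<omega>}"
      using tail[OF \<open>1 \<le> m\<close>] by (simp add: h_def p_def)
    also have "\<dots> = prob (space M - {\<omega> \<in> space M. m \<le> N \<omega>})" by (rule prob_compl[symmetric]) measurable
    also have "space M - {\<omega> \<in> space M. m \<le> N \<omega>} = {\<omega> \<in> space M. real (N \<omega>) \<le> x}"
      using False by (auto simp: real_le_iff_less_nat_floor_Suc m_def)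
    finally show ?thesis .
  qed
qed

section \<open>Measurability of the queueing model\<close>

lemma measurable_count_space_PowI:
  assumes "finite I" and "\<And>\<omega>. \<omega> \<in> space M \<Longrightarrow> f \<omega> \<subseteq> I"
    and "\<And>i. i \<in> I \<Longrightarrow> {\<omega> \<in> space M. i \<in> f \<omega>} \<in> sets M"
  shows "f \<in> measurable M (count_space (Pow I))"
proof (rule measurable_count_space_eq_countable[THEN iffD2], safe)
  show "countable (Pow I)" using assms(1) by (simp add: countable_finite)
  show "x \<in> I" if "\<omega> \<in> space M" "x \<in> f \<omega>" for \<omega> x using assms(2) that by auto
  fix B assume "B \<subseteq> I"
  have "f \<omega> = B \<longleftrightarrow> (\<forall>i\<in>I. i \<in> f \<omega> \<longleftrightarrow> i \<in> B)" if "\<omega> \<in> space M" for \<omega>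
    using assms(2)[OF that] \<open>B \<subseteq> I\<close> by blast
  then have "f -` {B} \<inter> space M = {\<omega> \<in> space M. \<forall>i\<in>I. i \<in> f \<omega> \<longleftrightarrow> i \<in> B}"
    by auto
  also have "\<dots> \<in> sets M"
  proof (rule sets.sets_Collect_finite_All[OF _ assms(1)])
    show "{\<omega> \<in> space M. i \<in> f \<omega> \<longleftrightarrow> i \<in> B} \<in> sets M" if "i \<in> I" for i
      using assms(3)[OF that] by (cases "i \<in> B") (simp_all add: sets.sets_Collect_neg)
  qed
  finally show "f -` {B} \<inter> space M \<in> sets M" .
qed

lemma mem_pick_min_iff:
  assumes "finite P"
  shows "i \<in> pick_min t P \<longleftrightarrow> i \<in> P \<and> (\<forall>j\<in>P. t i \<le> t j) \<and> (\<forall>j\<in>P. j < i \<longrightarrow> t i < t j)"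
proof (cases "P = {}")
  case False
  define Q where "Q i \<longleftrightarrow> i \<in> P \<and> (\<forall>j\<in>P. t i \<le> t j)" for i
  have "Min (t ` P) \<in> t ` P" using assms False by (intro Min_in) auto
  then obtain i0 where "i0 \<in> P" "t i0 = Min (t ` P)" by auto
  then have "Q i0" using assms by (auto simp: Q_def)
  have "(LEAST i. Q i) = i \<longleftrightarrow> Q i \<and> (\<forall>j\<in>P. j < i \<longrightarrow> t i < t j)" for i
  proof
    assume "(LEAST i. Q i) = i"
    then show "Q i \<and> (\<forall>j\<in>P. j < i \<longrightarrow> t i < t j)"
      using LeastI[of Q, OF \<open>Q i0\<close>] not_less_Least[of _ Q] by (auto simp: Q_def) (meson order.trans not_less)
  next
    assume "Q i \<and> (\<forall>j\<in>P. j < i \<longrightarrow> t i < t j)"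
    then show "(LEAST i. Q i) = i"
      by (intro Least_equality) (auto simp: Q_def not_less[symmetric])
  qed
  moreover have "i \<in> pick_min t P \<longleftrightarrow> (LEAST i. Q i) = i"
    using False by (auto simp: pick_min_def Q_def)
  ultimately show ?thesis unfolding Q_def by simp
qed (simp add: pick_min_def)

lemma pick_min_measurable:
  assumes "\<And>i. T i \<in> borel_measurable M" and "P \<subseteq> {1..n}"
  shows "(\<lambda>\<omega>. pick_min (\<lambda>i. T i \<omega>) P) \<in> measurable M (count_space (Pow {1..n}))"
proof (rule measurable_count_space_PowI)
  have "finite P" using assms(2) finite_subset by blast
  note [measurable] = assms(1)
  show "pick_min (\<lambda>i. T i \<omega>) P \<subseteq> {1..n}" for \<omega>
    using assms(2) by (auto simp: mem_pick_min_iff[OF \<open>finite P\<close>])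
  show "{\<omega> \<in> space M. i \<in> pick_min (\<lambda>i. T i \<omega>) P} \<in> sets M" for i
    unfolding mem_pick_min_iff[OF \<open>finite P\<close>] using \<open>finite P\<close> by measurable
qed simp

lemma Sig_measurable [measurable]:
  assumes [measurable]: "\<And>j. S j \<in> borel_measurable M"
  shows "(\<lambda>\<omega>. Sig n \<beta> (\<lambda>j. S j \<omega>) k) \<in> borel_measurable M"
  unfolding Sig_def svc_D_def by measurable

lemma Sig_restrict_measurable:
  assumes "l \<le> k"
  shows "(\<lambda>y. Sig n \<beta> (\<lambda>j. y (Inr j)) l) \<in> borel_measurable (PiM (Inr ` {1..k}) (\<lambda>_. borel))"
proof -
  have "(\<lambda>y. y (Inr j)) \<in> borel_measurable (PiM (Inr ` {1..k}) (\<lambda>_. borel))" if "j \<in> {1..l}" for j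
    using that assms by (intro measurable_component_singleton) auto
  then show ?thesis unfolding Sig_def svc_D_def
    by (intro borel_measurable_sum borel_measurable_times borel_measurable_divide borel_measurable_const)
      auto
qed

lemma arrivals_measurable:
  assumes [measurable]: "\<And>i. T i \<in> borel_measurable M" "\<And>j. S j \<in> borel_measurable M"
  shows "(\<lambda>\<omega>. arrivals n \<beta> (\<lambda>i. T i \<omega>) (\<lambda>j. S j \<omega>) \<nu> k) \<in> measurable M (count_space (Pow {1..n}))"
  by (rule measurable_count_space_PowI) (auto simp: arrivals_def)

lemma qstate_measurable:
  assumes "\<And>i. T i \<in> borel_measurable M" "\<And>j. S j \<in> borel_measurable M"
  shows "(\<lambda>\<omega>. qstate n \<beta> (\<lambda>i. T i \<omega>) (\<lambda>j. S j \<omega>) m) \<in> measurable M (count_space (Pow {1..n} \<times> UNIV))"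
proof (induction m)
  case 0
  show ?case
    by (simp, rule measurable_compose[OF pick_min_measurable[OF assms(1)]]) auto
next
  case (Suc m)
  let ?I = "Pow {1..n} \<times> (UNIV :: nat set)"
  define step where "step p B \<omega> = (fst p \<union> B \<union>
      (if snd p + card B = 0 then pick_min (\<lambda>i. T i \<omega>) ({1..n} - (fst p \<union> B)) else {}),
      snd p + card B - 1)" for p :: "nat set \<times> nat" and B \<omega>
  have step: "(\<lambda>\<omega>. step p B \<omega>) \<in> measurable M (count_space ?I)" if "p \<in> ?I" "B \<in> Pow {1..n}" for p B
  proof (cases "snd p + card B = 0")
    case True
    have "(\<lambda>\<omega>. (\<lambda>P'. (fst p \<union> B \<union> P', snd p + card B - 1))
        (pick_min (\<lambda>i. T i \<omega>) ({1..n} - (fst p \<union> B)))) \<in> measurable M (count_space ?I)"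
      by (rule measurable_compose[OF pick_min_measurable[OF assms(1)]]) (use that in auto)
    then show ?thesis using True by (simp add: step_def)
  next
    case False
    then show ?thesis unfolding step_def if_not_P[OF False] by (intro measurable_const) (use that in auto)
  qed
  \<comment> \<open>the state space is countable, so it suffices to fix the previous state p\<close>
  have "(\<lambda>\<omega>. step p (arrivals n \<beta> (\<lambda>i. T i \<omega>) (\<lambda>j. S j \<omega>) (fst p) (Suc m)) \<omega>)
      \<in> measurable M (count_space ?I)" if "p \<in> ?I" for p
    by (rule measurable_compose_countable'[OF step arrivals_measurable[OF assms]])
       (use that in \<open>auto intro: countable_finite\<close>)
  then have "(\<lambda>\<omega>. (\<lambda>p. step p (arrivals n \<beta> (\<lambda>i. T i \<omega>) (\<lambda>j. S j \<omega>) (fst p) (Suc m)) \<omega>)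
      (qstate n \<beta> (\<lambda>i. T i \<omega>) (\<lambda>j. S j \<omega>) m)) \<in> measurable M (count_space ?I)"
    by (rule measurable_compose_countable'[OF _ Suc.IH]) (auto intro: countable_finite)
  then show ?case by (simp add: step_def Let_def)
qed

lemma arr_count_measurable:
  assumes "\<And>i. T i \<in> borel_measurable M" "\<And>j. S j \<in> borel_measurable M"
  shows "(\<lambda>\<omega>. arr_count n \<beta> (\<lambda>i. T i \<omega>) (\<lambda>j. S j \<omega>) k) \<in> measurable M (count_space UNIV)"
proof -
  have "(\<lambda>\<omega>. card (arrivals n \<beta> (\<lambda>i. T i \<omega>) (\<lambda>j. S j \<omega>) (fst p) k)) \<in> measurable M (count_space UNIV)"
    for p :: "nat set \<times> nat"
    by (rule measurable_compose[OF arrivals_measurable[OF assms]]) auto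
  from measurable_compose_countable'[OF this qstate_measurable[OF assms]]
  show ?thesis by (simp add: arr_count_def countable_finite)
qed

section \<open>Arrivals during one service\<close>

lemma Sig_cong: "(\<And>j. j \<in> {1..k} \<Longrightarrow> s j = s' j) \<Longrightarrow> Sig n \<beta> s k = Sig n \<beta> s' k"
  unfolding Sig_def svc_D_def by (intro sum.cong) auto

lemma Sig_diff: "1 \<le> k \<Longrightarrow> Sig n \<beta> s k - Sig n \<beta> s (k - 1) = svc_D n \<beta> s k"
  by (cases k) (auto simp: Sig_def)

lemma real_mult_svc_D_le:
  assumes "1 \<le> n"
  shows "real n * max 0 (svc_D n \<beta> s k) \<le> \<bar>s k\<bar> * (1 + \<bar>\<beta>\<bar>)"
proof -
  have "real n powr (-1/3) \<le> 1" using powr_mono[of "-1/3" 0 "real n"] assms by simp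
  then have "\<bar>\<beta> * real n powr (-1/3)\<bar> \<le> \<bar>\<beta>\<bar>" by (simp add: abs_mult mult_left_le)
  then have factor: "\<bar>1 + \<beta> * real n powr (-1/3)\<bar> \<le> 1 + \<bar>\<beta>\<bar>" by linarith
  have "real n * svc_D n \<beta> s k = s k * (1 + \<beta> * real n powr (-1/3))"
    using assms unfolding svc_D_def by simp
  also have "\<dots> \<le> \<bar>s k\<bar> * \<bar>1 + \<beta> * real n powr (-1/3)\<bar>" by (simp add: abs_mult[symmetric])
  also have "\<dots> \<le> \<bar>s k\<bar> * (1 + \<bar>\<beta>\<bar>)" using factor by (intro mult_left_mono) auto
  finally show ?thesis by (simp add: max_def)
qed

lemma arr_count_ge_imp_many_in_window:
  assumes "m \<le> arr_count n \<beta> t s k"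
  shows "\<exists>J\<subseteq>{1..n}. card J = m \<and> (\<forall>i\<in>J. Sig n \<beta> s (k - 1) \<le> t i \<and> t i \<le> Sig n \<beta> s k)"
proof -
  obtain J where "J \<subseteq> arrivals n \<beta> t s (fst (qstate n \<beta> t s (k - 1))) k" "card J = m"
    using assms unfolding arr_count_def by (meson obtain_subset_with_card_n)
  then show ?thesis unfolding arrivals_def by blast
qed

lemma (in prob_space) arr_count_tail_le:
  fixes T S :: "nat \<Rightarrow> 'a \<Rightarrow> real"
  assumes indep: "indep_vars (\<lambda>_. borel) (case_sum T S) ({1..} <+> {1..})"
    and interval: "\<And>i lo hi. 1 \<le> i \<Longrightarrow>
      prob {\<omega> \<in> space M. lo \<le> T i \<omega> \<and> T i \<omega> \<le> hi} \<le> L * max 0 (hi - lo)"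
    and "0 \<le> L" and "1 \<le> n" and "1 \<le> k" and "1 \<le> m"
  shows "prob {\<omega> \<in> space M. m \<le> arr_count n \<beta> (\<lambda>i. T i \<omega>) (\<lambda>j. S j \<omega>) k}
    \<le> (1/2) ^ m + (1 - (1/2) ^ m) * prob {\<omega> \<in> space M. real m \<le> 6 * (L * (1 + \<bar>\<beta>\<bar>)) * \<bar>S k \<omega>\<bar>}"
proof -
  define I where "I = (Inl ` {1..n} :: (nat + nat) set)"
  define K where "K = (Inr ` {1..k} :: (nat + nat) set)"
  define Z where "Z = case_sum T S"
  define lo where "lo y = Sig n \<beta> (\<lambda>j. y (Inr j)) (k - 1)" for y :: "nat + nat \<Rightarrow> real"
  define hi where "hi y = Sig n \<beta> (\<lambda>j. y (Inr j)) k" for y :: "nat + nat \<Rightarrow> real"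
  define C where "C = {y \<in> space (PiM K (\<lambda>_. borel)). real m \<le> 6 * (L * (1 + \<bar>\<beta>\<bar>)) * \<bar>y (Inr k)\<bar>}"
  define W where "W = {\<omega> \<in> space M. \<exists>J\<subseteq>I. card J = m \<and>
      (\<forall>j\<in>J. lo (restrict (\<lambda>i. Z i \<omega>) K) \<le> Z j \<omega> \<and> Z j \<omega> \<le> hi (restrict (\<lambda>i. Z i \<omega>) K))}"
  have indep_IK: "indep_vars (\<lambda>_. borel) Z (I \<union> K)"
    unfolding Z_def by (rule indep_vars_subset[OF indep]) (auto simp: I_def K_def)
  have lo_meas: "lo \<in> borel_measurable (PiM K (\<lambda>_. borel))"
    unfolding lo_def K_def by (rule Sig_restrict_measurable) simp
  have hi_meas: "hi \<in> borel_measurable (PiM K (\<lambda>_. borel))"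
    unfolding hi_def K_def by (rule Sig_restrict_measurable) simp
  have C_sets: "C \<in> sets (PiM K (\<lambda>_. borel))"
  proof -
    have [measurable]: "(\<lambda>y. y (Inr k)) \<in> borel_measurable (PiM K (\<lambda>_. borel))"
      unfolding K_def using \<open>1 \<le> k\<close> by (intro measurable_component_singleton) auto
    show ?thesis unfolding C_def by measurable
  qed
  have short_window: "6 * (real (card I) * (L * max 0 (hi y - lo y))) \<le> real m"
    if "y \<in> space (PiM K (\<lambda>_. borel))" "y \<notin> C" for y
  proof -
    have "real n * max 0 (hi y - lo y) \<le> \<bar>y (Inr k)\<bar> * (1 + \<bar>\<beta>\<bar>)"
      unfolding hi_def lo_def Sig_diff[OF \<open>1 \<le> k\<close>] by (rule real_mult_svc_D_le[OF \<open>1 \<le> n\<close>])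
    from mult_left_mono[OF this \<open>0 \<le> L\<close>]
    have "real n * (L * max 0 (hi y - lo y)) \<le> L * (1 + \<bar>\<beta>\<bar>) * \<bar>y (Inr k)\<bar>"
      by (simp add: algebra_simps)
    then show ?thesis using that by (simp add: I_def card_image C_def)
  qed
  have interval_I: "prob {\<omega> \<in> space M. a \<le> Z j \<omega> \<and> Z j \<omega> \<le> b} \<le> L * max 0 (b - a)"
    if "j \<in> I" for j a b
    using that interval by (auto simp: I_def Z_def)
  have "I \<inter> K = {}" "finite I" by (auto simp: I_def K_def)
  note window = prob_many_in_random_window_le[OF indep_IK this \<open>1 \<le> m\<close> \<open>0 \<le> L\<close> lo_meas hi_meas
      interval_I C_sets short_window, folded W_def]
  have "{\<omega> \<in> space M. m \<le> arr_count n \<beta> (\<lambda>i. T i \<omega>) (\<lambda>j. S j \<omega>) k} \<subseteq> W"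
  proof safe
    fix \<omega> assume "\<omega> \<in> space M" "m \<le> arr_count n \<beta> (\<lambda>i. T i \<omega>) (\<lambda>j. S j \<omega>) k"
    then obtain J where "J \<subseteq> {1..n}" "card J = m"
      and J: "\<forall>i\<in>J. Sig n \<beta> (\<lambda>j. S j \<omega>) (k - 1) \<le> T i \<omega> \<and> T i \<omega> \<le> Sig n \<beta> (\<lambda>j. S j \<omega>) k"
      using arr_count_ge_imp_many_in_window by blast
    have "lo (restrict (\<lambda>i. Z i \<omega>) K) = Sig n \<beta> (\<lambda>j. S j \<omega>) (k - 1)"
      "hi (restrict (\<lambda>i. Z i \<omega>) K) = Sig n \<beta> (\<lambda>j. S j \<omega>) k"
      unfolding lo_def hi_def by (auto intro!: Sig_cong simp: K_def Z_def)
    with J have "\<forall>j\<in>Inl ` J. lo (restrict (\<lambda>i. Z i \<omega>) K) \<le> Z j \<omega> \<and> Z j \<omega> \<le> hi (restrict (\<lambda>i. Z i \<omega>) K)"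
      by (simp add: Z_def)
    moreover have "Inl ` J \<subseteq> I" "card (Inl ` J) = m"
      using \<open>J \<subseteq> {1..n}\<close> \<open>card J = m\<close> by (auto simp: I_def card_image)
    ultimately show "\<omega> \<in> W" unfolding W_def using \<open>\<omega> \<in> space M\<close> by blast
  qed
  then have "prob {\<omega> \<in> space M. m \<le> arr_count n \<beta> (\<lambda>i. T i \<omega>) (\<lambda>j. S j \<omega>) k} \<le> prob W"
    using window(1) by (rule finite_measure_mono)
  also have "\<dots> \<le> (1/2) ^ m + (1 - (1/2) ^ m) * prob {\<omega> \<in> space M. restrict (\<lambda>i. Z i \<omega>) K \<in> C}"
    by (rule window(2))
  also have "{\<omega> \<in> space M. restrict (\<lambda>i. Z i \<omega>) K \<in> C}
      = {\<omega> \<in> space M. real m \<le> 6 * (L * (1 + \<bar>\<beta>\<bar>)) * \<bar>S k \<omega>\<bar>}"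
    using \<open>1 \<le> k\<close> by (auto simp: C_def K_def Z_def space_PiM)
  finally show ?thesis .
qed

lemma (in prob_space) arr_count_dominated:
  fixes T S :: "nat \<Rightarrow> 'a \<Rightarrow> real"
  assumes meas: "\<And>i. T i \<in> borel_measurable M" "\<And>j. S j \<in> borel_measurable M"
    and indep: "indep_vars (\<lambda>_. borel) (case_sum T S) ({1..} <+> {1..})"
    and interval: "\<And>i lo hi. 1 \<le> i \<Longrightarrow>
      prob {\<omega> \<in> space M. lo \<le> T i \<omega> \<and> T i \<omega> \<le> hi} \<le> L * max 0 (hi - lo)"
    and "0 \<le> L" and "1 \<le> n" and "1 \<le> k"
    and identical: "distr M borel (S k) = distr M borel (S 1)"
  shows "dominated_by_law M (\<lambda>\<omega>. real (arr_count n \<beta> (\<lambda>i. T i \<omega>) (\<lambda>j. S j \<omega>) k))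
    (max_geometric_law (distr M borel (\<lambda>\<omega>. 6 * (L * (1 + \<bar>\<beta>\<bar>)) * \<bar>S 1 \<omega>\<bar>)))"
proof (rule dominated_by_max_geometric_law[OF arr_count_measurable[OF meas]])
  show "(\<lambda>\<omega>. 6 * (L * (1 + \<bar>\<beta>\<bar>)) * \<bar>S 1 \<omega>\<bar>) \<in> borel_measurable M"
    using meas(2)[of 1] by measurable
  fix m :: nat assume "1 \<le> m"
  have "prob {\<omega> \<in> space M. real m \<le> 6 * (L * (1 + \<bar>\<beta>\<bar>)) * \<bar>S k \<omega>\<bar>}
      = prob {\<omega> \<in> space M. real m \<le> 6 * (L * (1 + \<bar>\<beta>\<bar>)) * \<bar>S 1 \<omega>\<bar>}"
    by (rule prob_eq_of_distr_eq[OF identical meas(2) meas(2)]) measurable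
  then show "prob {\<omega> \<in> space M. m \<le> arr_count n \<beta> (\<lambda>i. T i \<omega>) (\<lambda>j. S j \<omega>) k}
      \<le> (1/2) ^ m + (1 - (1/2) ^ m) * prob {\<omega> \<in> space M. real m \<le> 6 * (L * (1 + \<bar>\<beta>\<bar>)) * \<bar>S 1 \<omega>\<bar>}"
    using arr_count_tail_le[OF indep interval \<open>0 \<le> L\<close> \<open>1 \<le> n\<close> \<open>1 \<le> k\<close> \<open>1 \<le> m\<close>, where \<beta>=\<beta>]
    by simp
qed

theorem mainTheorem13:
  fixes M :: "'a measure" and T S :: "nat \<Rightarrow> 'a \<Rightarrow> real"
    and F fT :: "real \<Rightarrow> real" and \<beta> :: real
  assumes "prob_space M"
    and meas: "\<And>i. T i \<in> borel_measurable M" "\<And>j. S j \<in> borel_measurable M"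
    and indep: "prob_space.indep_vars M (\<lambda>_. borel) (case_sum T S) ({1..} <+> {1..})"
    and cdfT: "\<And>i x. i \<ge> 1 \<Longrightarrow> measure M {\<omega> \<in> space M. T i \<omega> \<le> x} = F x"
    and Sid: "\<And>j. j \<ge> 1 \<Longrightarrow> distr M borel (S j) = distr M borel (S 1)"
    and Snonneg: "\<And>j. j \<ge> 1 \<Longrightarrow> AE \<omega> in M. S j \<omega> \<ge> 0"
    and S2: "integrable M (\<lambda>\<omega>. (S 1 \<omega>)\<^sup>2)"
    and F_neg: "\<And>x. x < 0 \<Longrightarrow> F x = 0"
    and A1_dens: "\<And>x. x \<ge> 0 \<Longrightarrow> (fT has_integral F x) {0..x}"
    and A1_cont: "continuous_on {0..} fT"
    and A1_pos: "\<And>x. x \<ge> 0 \<Longrightarrow> fT x > 0"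
    and A2: "\<And>xb. xb > 0 \<Longrightarrow>
       (\<lambda>x. F x - F xb - fT xb * (x - xb)) \<in> o[at xb](\<lambda>x. \<bar>x - xb\<bar> powr (4/3))"
    and A3: "\<And>C \<epsilon>. C > 0 \<Longrightarrow> \<epsilon> > 0 \<Longrightarrow>
       eventually (\<lambda>y. \<forall>xb \<in> {0..C * y powr (1/3)}.
          \<bar>F (xb + y) - F xb - fT xb * y\<bar> \<le> \<epsilon> * y) (at_right 0)"
    and A4: "\<exists>\<delta>>0. \<exists>f'. (\<forall>x\<in>{0..<\<delta>}. (fT has_real_derivative f' x) (at x within {0..}))
                        \<and> continuous_on {0..<\<delta>} f'"
    and A5: "\<And>x. x \<ge> 0 \<Longrightarrow> fT x \<le> fT 0"
  shows "\<forall>t>0. \<exists>\<mu> :: nat \<Rightarrow> real measure.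
           (\<forall>n\<ge>1. prob_space (\<mu> n) \<and> sets (\<mu> n) = sets borel \<and> emeasure (\<mu> n) {..<0} = 0)
         \<and> (\<forall>n\<ge>1. \<forall>k::nat. 1 \<le> k \<and> real k \<le> t * real n powr (2/3) \<longrightarrow>
              dominated_by_law M (\<lambda>\<omega>. real (arr_count n \<beta> (\<lambda>i. T i \<omega>) (\<lambda>j. S j \<omega>) k)) (\<mu> n))
         \<and> unif_integrable_laws {1..} (\<lambda>n. distr (\<mu> n) borel (\<lambda>x. x\<^sup>2))"
proof -
  interpret prob_space M by fact
  define L where "L = fT 0"
  define \<mu> where "\<mu> = max_geometric_law (distr M borel (\<lambda>\<omega>. 6 * (L * (1 + \<bar>\<beta>\<bar>)) * \<bar>S 1 \<omega>\<bar>))"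
  have "0 < L" using A1_pos[of 0] by (simp add: L_def)
  have interval: "prob {\<omega> \<in> space M. lo \<le> T i \<omega> \<and> T i \<omega> \<le> hi} \<le> L * max 0 (hi - lo)"
    if "1 \<le> i" for i lo hi
    using cdf_increment_le[OF F_neg A1_dens A5] \<open>0 < L\<close>
    by (intro prob_between_le[OF meas(1) cdfT[OF that]]) (auto simp: L_def)
  have "prob_space \<mu>" "sets \<mu> = sets borel" "emeasure \<mu> {..<0} = 0"
    unfolding \<mu>_def using meas(2)[of 1]
    by (auto intro!: prob_space_max_geometric_law prob_space_distr emeasure_max_geometric_law_negative)
  moreover have "dominated_by_law M (\<lambda>\<omega>. real (arr_count n \<beta> (\<lambda>i. T i \<omega>) (\<lambda>j. S j \<omega>) k)) \<mu>"
    if "1 \<le> n" "1 \<le> k" for n k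
    unfolding \<mu>_def using \<open>0 < L\<close> Sid[OF \<open>1 \<le> k\<close>]
    by (intro arr_count_dominated[OF meas indep interval _ that]) auto
  moreover have "unif_integrable_laws {1..} (\<lambda>n. distr \<mu> borel (\<lambda>x. x\<^sup>2))"
    unfolding \<mu>_def by (rule unif_integrable_laws_square_max_geometric_law[OF meas(2) S2])
  ultimately show ?thesis by (intro allI impI exI[of _ "\<lambda>_. \<mu>"]) auto
qed

end
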